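(* Let $n\geq1$, $\beta>0$, and let $f(\xi)\in\mathbb{Z}_p[\xi_1,\ldots,\xi_n]$ be an elliptic polynomial of degree $d$. Let $A=\{\xi\in\mathbb{Z}_p^n: |\xi_i|_p=1\text{ for some }i\}$ and let $M$ be a positive integer such that $|f(\xi)|_p\geq p^{-M}$ for all $\xi\in A$. Then there is a constant $C>0$ such that for all $x\in\mathbb{Q}_p^n$ and $t>0$ with $p^{(M+1)d\beta}\,t\,\|x\|_p^{-d\beta}\leq 1$, \[ |Z(x,t)|\leq C\,t\,\|x\|_p^{-d\beta-n}. \]
   Context: $\mathbb{Q}_p$ is the field of $p$-adic numbers, $\mathbb{Z}_p$ its ring of integers, $|\cdot|_p$ the $p$-adic absolute value, $\|x\|_p=\max_i|x_i|_p$. $d\xi$ is the Haar measure on $\mathbb{Q}_p^n$ with $\mathbb{Z}_p^n$ of measure $1$. $\Psi$ is the standard additive character of $\mathbb{Q}_p$, $\Psi(a)=\exp(2\pi i\{a\}_p)$ where $\{a\}_p$ is the fractional part of $a$, and $x\cdot\xi=\sum_i x_i\xi_i$. A polynomial $f\in\mathbb{Q}_p[\xi_1,\dots,\xi_n]$ is elliptic of degree $d$ if it is a non-constant homogeneous polynomial of degree $d$ and $f(\xi)=0\iff\xi=0$. $Z(x,t)=\int_{\mathbb{Q}_p^n}\Psi(x\cdot\xi)e^{-t|f(\xi)|_p^{\beta}}\,d\xi$. (The constant $M$ is the one provided for this set $A$ by the paper's lemma guaranteeing a positive lower bound $p^{-M}$ for $|f|_p$ on compact sets avoiding $0$.) 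*)

theory Defs
  imports "HOL-Analysis.Analysis" "HOL-Computational_Algebra.Primes"
begin

text \<open>We model Q_p as an
arbitrary field 'k of characteristic 0 equipped with an absolute value absval that
is non-archimedean, restricts to the p-adic absolute value on the rationals,
is complete, and in which the rationals are dense. These properties characterize
(Q_p, |.|_p) up to isomorphism of valued fields.\<close>

definition is_Qp :: "nat \<Rightarrow> ('k::field_char_0 \<Rightarrow> real) \<Rightarrow> bool" where
  "is_Qp p absval \<longleftrightarrow>
     prime p \<and>
     (\<forall>x. absval x \<ge> 0) \<and>
     (\<forall>x. absval x = 0 \<longleftrightarrow> x = 0) \<and>
     (\<forall>x y. absval (x * y) = absval x * absval y) \<and>
     (\<forall>x y. absval (x + y) \<le> max (absval x) (absval y)) \<and>
     absval (of_nat p) = 1 / real p \<and>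
     (\<forall>m::int. \<not> int p dvd m \<longrightarrow> absval (of_int m) = 1) \<and>
     (\<forall>X::nat \<Rightarrow> 'k.
        (\<forall>e>0. \<exists>N. \<forall>m\<ge>N. \<forall>k\<ge>N. absval (X m - X k) < e) \<longrightarrow>
        (\<exists>L. \<forall>e>0. \<exists>N. \<forall>m\<ge>N. absval (X m - L) < e)) \<and>
     (\<forall>x. \<forall>e>0. \<exists>q::rat. absval (x - of_rat q) < e)"

definition pnorm :: "('k \<Rightarrow> real) \<Rightarrow> ('n::finite \<Rightarrow> 'k) \<Rightarrow> real" where
  "pnorm absval x = Max (range (\<lambda>i. absval (x i)))"

definition pball :: "('k::ab_group_add \<Rightarrow> real) \<Rightarrow> ('n \<Rightarrow> 'k) \<Rightarrow> real \<Rightarrow> ('n \<Rightarrow> 'k) set" where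
  "pball absval a r = {\<xi>. \<forall>i. absval (\<xi> i - a i) \<le> r}"

definition is_padic_haar ::
  "('k::field_char_0 \<Rightarrow> real) \<Rightarrow> ('n::finite \<Rightarrow> 'k) measure \<Rightarrow> bool" where
  "is_padic_haar absval \<mu> \<longleftrightarrow>
     space \<mu> = UNIV \<and>
     sets \<mu> = sigma_sets UNIV {pball absval a r | a r. r > 0} \<and>
     (\<forall>A\<in>sets \<mu>. \<forall>a. emeasure \<mu> ((\<lambda>\<xi>. (\<lambda>i. a i + \<xi> i)) ` A) = emeasure \<mu> A) \<and>
     emeasure \<mu> (pball absval (\<lambda>_. 0) 1) = 1"

definition padic_frac :: "nat \<Rightarrow> ('k::field_char_0 \<Rightarrow> real) \<Rightarrow> 'k \<Rightarrow> rat" where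
  "padic_frac p absval a = (THE r::rat. 0 \<le> r \<and> r < 1 \<and>
      (\<exists>k::nat. r * of_nat p ^ k \<in> \<int>) \<and> absval (a - of_rat r) \<le> 1)"

definition Psi :: "nat \<Rightarrow> ('k::field_char_0 \<Rightarrow> real) \<Rightarrow> 'k \<Rightarrow> complex" where
  "Psi p absval a = exp (2 * complex_of_real pi * \<i> * complex_of_real (real_of_rat (padic_frac p absval a)))"

definition hpoly :: "nat \<Rightarrow> (('n::finite \<Rightarrow> nat) \<Rightarrow> 'k::comm_ring_1) \<Rightarrow> ('n \<Rightarrow> 'k) \<Rightarrow> 'k" where
  "hpoly d c \<xi> = (\<Sum>\<alpha>\<in>{\<alpha>::'n \<Rightarrow> nat. sum \<alpha> UNIV = d}. c \<alpha> * (\<Prod>i\<in>UNIV. \<xi> i ^ \<alpha> i))"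

definition Zkernel ::
  "nat \<Rightarrow> ('k::field_char_0 \<Rightarrow> real) \<Rightarrow> ('n::finite \<Rightarrow> 'k) measure \<Rightarrow> (('n \<Rightarrow> 'k) \<Rightarrow> 'k)
   \<Rightarrow> real \<Rightarrow> ('n \<Rightarrow> 'k) \<Rightarrow> real \<Rightarrow> complex" where
  "Zkernel p absval \<mu> f \<beta> x t =
     (LINT \<xi>|\<mu>. Psi p absval (\<Sum>i\<in>UNIV. x i * \<xi> i) *
                complex_of_real (exp (- t * absval (f \<xi>) powr \<beta>)))"

end

theory Submission
  imports Defs
begin

text \<open>
  Write N = \<parallel>x\<parallel> and \<rho> = p^(M+1) / N. Homogeneity and the bound on the unit sphere give
  |f \<xi>| \<ge> p^(-M) \<parallel>\<xi>\<parallel>^d, and with the ultrametric inequality this makes |f| constant on every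
  ball of radius < p^(-M) \<parallel>\<xi>\<parallel> around \<xi> \<noteq> 0. Choose \<eta> with x\<cdot>\<eta> = 1/p and
  \<parallel>\<eta>\<parallel> \<le> p/N = p^(-M) \<rho>. The heat factor exp(-t|f|^\<beta>), replaced by 1 on the ball B of
  radius \<rho>, is then invariant under translation by \<eta>, while \<Psi>(x\<cdot>\<xi>) is multiplied by the root
  of unity exp(2\<pi>i/p) \<noteq> 1; by translation invariance of the Haar measure the integral of the
  product vanishes. What remains of Z(x,t) is the integral over B of \<Psi>(x\<cdot>\<xi>)(exp(-t|f|^\<beta>) - 1),
  which is at most vol(B) t \<rho>^(d\<beta>) \<le> (p\<rho>)^n t \<rho>^(d\<beta>) = C t N^(-d\<beta>-n).
\<close>

definition translate :: "('n \<Rightarrow> 'a::plus) \<Rightarrow> ('n \<Rightarrow> 'a) \<Rightarrow> ('n \<Rightarrow> 'a)" where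
  "translate a \<xi> = (\<lambda>i. a i + \<xi> i)"

lemma hpoly_scale: "hpoly d c (\<lambda>i. s * u i) = s ^ d * hpoly d c u"
proof -
  have "(\<Prod>i\<in>UNIV. (s * u i) ^ \<alpha> i) = s ^ d * (\<Prod>i\<in>UNIV. u i ^ \<alpha> i)" if "sum \<alpha> UNIV = d" for \<alpha>
    using that by (simp add: power_mult_distrib prod.distrib power_sum[symmetric])
  then show ?thesis
    unfolding hpoly_def by (simp add: sum_distrib_left algebra_simps)
qed

lemma norm_integral_le_indicator_bound:
  fixes h :: "'a \<Rightarrow> 'b::{banach, second_countable_topology}"
  assumes "h \<in> borel_measurable M" "B \<in> sets M" "emeasure M B < \<infinity>"
    and bound: "\<And>x. norm (h x) \<le> indicator B x * K"
  shows "integrable M h" "norm (integral\<^sup>L M h) \<le> measure M B * K"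
proof -
  have int_bound: "integrable M (\<lambda>x. indicator B x * K)"
    using assms(2,3) by simp
  show "integrable M h"
    using bound order_trans[OF norm_ge_zero bound]
    by (intro Bochner_Integration.integrable_bound[OF int_bound assms(1)] AE_I2) simp
  then have "norm (integral\<^sup>L M h) \<le> (\<integral>x. indicator B x * K \<partial>M)"
    by (intro order_trans[OF Bochner_Integration.integral_norm_bound]
        Bochner_Integration.integral_mono int_bound bound) auto
  then show "norm (integral\<^sup>L M h) \<le> measure M B * K"
    using sets.sets_into_space[OF assms(2)] by (simp add: Int_absorb2)
qed

lemma norm_integral_le_if_integral_diff_eq_0:
  fixes f g :: "'a \<Rightarrow> 'b::{banach, second_countable_topology}"
  assumes "integrable M g" "(\<integral>x. f x - g x \<partial>M) = 0"
  shows "norm (integral\<^sup>L M f) \<le> norm (integral\<^sup>L M g)"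
proof (cases "integrable M f")
  case True
  then have "integral\<^sup>L M f = (\<integral>x. f x - g x \<partial>M) + integral\<^sup>L M g"
    using assms(1) by simp
  then show ?thesis
    using assms(2) by simp
qed (simp add: not_integrable_integral_eq)

lemma scaled_volume_eq:
  fixes q a N t e :: real and n :: nat
  assumes "q > 0" "N > 0"
  shows "(q * (q powr a / N)) ^ n * (t * (q powr a / N) powr e)
    = q ^ n * q powr (a * (e + n)) * t * N powr (- e - n)"
proof -
  have "(q * (q powr a / N)) ^ n = q ^ n * (q powr a / N) powr n"
    using assms by (simp only: power_mult_distrib) (simp add: powr_realpow)
  moreover have "(q powr a / N) powr n * (q powr a / N) powr e = (q powr a / N) powr (e + n)"
    by (simp add: powr_add add.commute)
  moreover have "(q powr a / N) powr (e + n) = q powr (a * (e + n)) * N powr (- e - n)"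
  proof -
    have "N powr (- e - n) * N powr (e + n) = 1"
      using assms by (simp flip: powr_add)
    then show ?thesis
      using assms by (simp add: powr_divide powr_powr field_simps)
  qed
  ultimately show ?thesis
    by (simp add: mult_ac)
qed

section \<open>Non-archimedean absolute values\<close>

locale padic_field =
  fixes p :: nat and absval :: "'k::field_char_0 \<Rightarrow> real"
  assumes is_Qp: "is_Qp p absval"
begin

lemma prime_p: "prime p"
  using is_Qp by (simp add: is_Qp_def)

lemma absval_nonneg [simp]: "absval x \<ge> 0"
  using is_Qp by (simp add: is_Qp_def)

lemma absval_eq_0_iff [simp]: "absval x = 0 \<longleftrightarrow> x = 0"
  using is_Qp by (simp add: is_Qp_def)

lemma absval_mult: "absval (x * y) = absval x * absval y"
  using is_Qp by (simp add: is_Qp_def)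

lemma absval_add_le_max: "absval (x + y) \<le> max (absval x) (absval y)"
  using is_Qp by (simp add: is_Qp_def)

lemma absval_of_nat_p: "absval (of_nat p) = 1 / real p"
  using is_Qp by (simp add: is_Qp_def)

lemma absval_of_int_not_dvd: "\<not> int p dvd m \<Longrightarrow> absval (of_int m) = 1"
  using is_Qp by (simp add: is_Qp_def)

lemma rat_dense: "e > 0 \<Longrightarrow> \<exists>q::rat. absval (x - of_rat q) < e"
  using is_Qp by (simp add: is_Qp_def)

lemma p_ge_2: "p \<ge> 2"
  using prime_p prime_ge_2_nat by blast

lemma p_pos: "real p > 0"
  using p_ge_2 by simp

lemma p_powr_neg_le_1: "a \<ge> 0 \<Longrightarrow> real p powr (- a) \<le> 1"
  using p_ge_2 by (simp add: powr_minus_divide ge_one_powr_ge_zero)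

lemma absval_0 [simp]: "absval 0 = 0"
  by simp

lemma absval_pos_iff [simp]: "absval x > 0 \<longleftrightarrow> x \<noteq> 0"
  using absval_nonneg[of x] absval_eq_0_iff[of x] by linarith

lemma absval_1 [simp]: "absval 1 = 1"
  using absval_of_int_not_dvd[of 1] p_ge_2 by simp

lemma absval_minus [simp]: "absval (- x) = absval x"
  using absval_of_int_not_dvd[of "-1"] absval_mult[of "-1" x] p_ge_2 by simp

lemma absval_minus_commute: "absval (x - y) = absval (y - x)"
  using absval_minus[of "x - y"] by simp

lemma absval_inverse: "absval (inverse x) = inverse (absval x)"
  by (cases "x = 0") (auto simp: absval_mult[symmetric] intro: inverse_unique[symmetric])

lemma absval_divide: "absval (x / y) = absval x / absval y"
  by (simp add: divide_inverse absval_mult absval_inverse)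

lemma absval_power: "absval (x ^ n) = absval x ^ n"
  by (induction n) (auto simp: absval_mult)

lemma absval_of_nat_p_power: "absval (of_nat p ^ n) = (1 / real p) ^ n"
  by (simp add: absval_power absval_of_nat_p)

lemma absval_prod: "absval (prod f S) = (\<Prod>i\<in>S. absval (f i))"
  by (induction S rule: infinite_finite_induct) (auto simp: absval_mult)

lemma absval_add_le: "absval x \<le> c \<Longrightarrow> absval y \<le> c \<Longrightarrow> absval (x + y) \<le> c"
  using absval_add_le_max[of x y] by linarith

lemma absval_diff_le: "absval x \<le> c \<Longrightarrow> absval y \<le> c \<Longrightarrow> absval (x - y) \<le> c"
  using absval_add_le[of x c "- y"] by simp

lemma absval_sum_le:
  "0 \<le> c \<Longrightarrow> (\<And>i. i \<in> S \<Longrightarrow> absval (f i) \<le> c) \<Longrightarrow> absval (sum f S) \<le> c"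
  by (induction S rule: infinite_finite_induct) (auto intro!: absval_add_le)

lemma absval_add_eq_left: "absval y < absval x \<Longrightarrow> absval (x + y) = absval x"
  using absval_add_le_max[of x y] absval_add_le_max[of "x + y" "- y"] by auto

lemma absval_of_int: "m \<noteq> 0 \<Longrightarrow> absval (of_int m) = (1 / real p) ^ multiplicity (int p) m"
proof -
  assume "m \<noteq> 0"
  moreover have "\<not> is_unit (int p)"
    using p_ge_2 by simp
  ultimately obtain w where "m = int p ^ multiplicity (int p) m * w" "\<not> int p dvd w"
    by (rule multiplicity_decompose')
  then show ?thesis
    by (metis absval_of_int_not_dvd absval_mult absval_of_nat_p_power mult.right_neutral
        of_int_mult of_int_of_nat_eq of_int_power)
qed

lemma absval_of_int_le_1: "absval (of_int m) \<le> 1"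
  using absval_of_int[of m] p_ge_2 by (cases "m = 0") (auto intro: power_le_one)

lemma absval_of_int_le_iff_dvd: "absval (of_int m) \<le> (1 / real p) ^ K \<longleftrightarrow> int p ^ K dvd m"
proof (cases "m = 0")
  case False
  have "\<not> is_unit (int p)"
    using p_ge_2 by simp
  moreover have "(1 / real p) ^ k \<le> (1 / real p) ^ K \<longleftrightarrow> K \<le> k" for k
    using p_ge_2 by simp
  ultimately show ?thesis
    using False by (simp add: absval_of_int power_dvd_iff_le_multiplicity)
qed simp

lemma rat_in_Ints_if_absval_le_1:
  assumes m: "r * of_nat p ^ k = of_int m" and r: "absval (of_rat r :: 'k) \<le> 1"
  shows "r \<in> \<int>"
proof -
  have pk: "(of_nat p ^ k :: rat) \<noteq> 0"
    using p_ge_2 by simp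
  then have "r = of_int m / of_nat p ^ k"
    using m by (simp add: eq_divide_eq)
  then have "(of_rat r :: 'k) = of_int m / of_nat p ^ k"
    by (simp add: of_rat_divide of_rat_power)
  then have "absval (of_rat r :: 'k) = absval (of_int m :: 'k) / (1 / real p) ^ k"
    by (simp add: absval_divide absval_of_nat_p_power)
  with r have "absval (of_int m :: 'k) \<le> (1 / real p) ^ k"
    using p_pos by (simp add: divide_le_eq)
  then obtain j where "m = int p ^ k * j"
    by (auto simp: absval_of_int_le_iff_dvd)
  with m have "r * of_nat p ^ k = of_int j * of_nat p ^ k"
    by simp
  then have "r = of_int j"
    by (simp only: mult_right_cancel[OF pk])
  then show ?thesis
    by simp
qed

lemma p_power_denom_approx_diff_in_Ints:
  assumes "r1 * of_nat p ^ k1 \<in> \<int>" "r2 * of_nat p ^ k2 \<in> \<int>"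
    and "absval (a - of_rat r1) \<le> 1" "absval (a - of_rat r2) \<le> 1"
  shows "r1 - r2 \<in> \<int>"
proof -
  have "(r1 - r2) * of_nat p ^ (k1 + k2)
      = (r1 * of_nat p ^ k1) * of_nat p ^ k2 - (r2 * of_nat p ^ k2) * of_nat p ^ k1"
    by (simp add: power_add algebra_simps)
  also have "\<dots> \<in> \<int>"
    by (intro Ints_diff Ints_mult[OF assms(1)] Ints_mult[OF assms(2)]) simp_all
  finally obtain m where "(r1 - r2) * of_nat p ^ (k1 + k2) = of_int m"
    by (auto elim: Ints_cases)
  moreover have "absval (of_rat (r1 - r2) :: 'k) \<le> 1"
    using absval_diff_le[OF assms(4,3)] by (simp add: of_rat_diff)
  ultimately show ?thesis
    by (rule rat_in_Ints_if_absval_le_1)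
qed

lemma not_p_dvd_denominator:
  assumes q: "absval (of_rat q :: 'k) \<le> 1" and sD: "quotient_of q = (s, D)"
  shows "\<not> int p dvd D"
proof
  assume "int p dvd D"
  then have "\<not> int p dvd s"
    using quotient_of_coprime[OF sD] p_ge_2 coprime_common_divisor by fastforce
  have "D > 0"
    using quotient_of_denom_pos[OF sD] .
  have "absval (of_int D :: 'k) \<le> 1 / real p"
    using absval_of_int_le_iff_dvd[of D 1] \<open>int p dvd D\<close> by simp
  then have "real p \<le> 1 / absval (of_int D :: 'k)"
    using p_pos \<open>D > 0\<close> by (simp add: field_simps)
  also have "\<dots> = absval (of_rat q :: 'k)"
    using quotient_of_div[OF sD] \<open>\<not> int p dvd s\<close>
    by (simp add: of_rat_divide absval_divide absval_of_int_not_dvd)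
  finally show False
    using q p_ge_2 by simp
qed

lemma rat_approx_by_int:
  assumes q: "absval (of_rat q :: 'k) \<le> 1"
  shows "\<exists>m::int. absval (of_rat q - of_int m :: 'k) \<le> (1 / real p) ^ K"
proof -
  obtain s D where sD: "quotient_of q = (s, D)"
    by (cases "quotient_of q") auto
  have "prime (int p)"
    using prime_p by simp
  then have "coprime (int p) D"
    using not_p_dvd_denominator[OF q sD] by (simp add: prime_imp_coprime)
  then have "coprime D (int p ^ K)"
    by (simp add: coprime_commute)
  then obtain u v where uv: "u * D + v * int p ^ K = 1"
    by (metis bezout_int coprime_iff_gcd_eq_1)
  \<comment> \<open>\<open>u\<close> inverts the denominator modulo \<open>p\<^sup>K\<close>, so \<open>s u\<close> approximates \<open>q = s/D\<close>.\<close>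
  have "(of_rat q :: 'k) - of_int (s * u) = of_int (s * v * int p ^ K) / of_int D"
  proof -
    have "s = s * u * D + s * v * int p ^ K"
      using arg_cong[OF uv, of "(*) s"] by (simp add: algebra_simps)
    then have "(of_int s :: 'k) = of_int (s * u) * of_int D + of_int (s * v * int p ^ K)"
      by (metis of_int_add of_int_mult)
    moreover have "(of_rat q :: 'k) = of_int s / of_int D"
      using quotient_of_div[OF sD] by (simp add: of_rat_divide)
    ultimately show ?thesis
      using quotient_of_denom_pos[OF sD] by (simp add: field_simps)
  qed
  also have "absval \<dots> \<le> (1 / real p) ^ K"
    using absval_of_int_le_iff_dvd[of "s * v * int p ^ K" K] not_p_dvd_denominator[OF q sD]
    by (simp add: absval_divide absval_of_int_not_dvd)
  finally show ?thesis
    by blast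
qed

lemma int_approx_mod_p_power:
  assumes b: "absval b \<le> 1"
  shows "\<exists>m::int. 0 \<le> m \<and> m < int p ^ K \<and> absval (b - of_int m) \<le> (1 / real p) ^ K"
proof -
  have pK: "0 < (1 / real p) ^ K" "(1 / real p) ^ K \<le> 1"
    using p_ge_2 by (auto intro: power_le_one)
  obtain q where q: "absval (b - of_rat q) < (1 / real p) ^ K"
    using rat_dense[OF pK(1)] by blast
  have "absval (of_rat q :: 'k) \<le> 1"
    using absval_diff_le[OF b, of "b - of_rat q"] q pK by simp
  then obtain m where m: "absval (of_rat q - of_int m :: 'k) \<le> (1 / real p) ^ K"
    using rat_approx_by_int by blast
  define m' where "m' = m mod int p ^ K"
  have "absval (of_int (m - m') :: 'k) \<le> (1 / real p) ^ K"
    unfolding m'_def absval_of_int_le_iff_dvd by (simp add: minus_mod_eq_mult_div)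
  then have "absval ((b - of_rat q) + (of_rat q - of_int m) + of_int (m - m')) \<le> (1 / real p) ^ K"
    by (intro absval_add_le less_imp_le[OF q] m)
  then have "absval (b - of_int m') \<le> (1 / real p) ^ K"
    by simp
  moreover have "0 \<le> m'" "m' < int p ^ K"
    using p_ge_2 by (simp_all add: m'_def)
  ultimately show ?thesis
    by blast
qed

lemma exists_p_power_denom_approx: "\<exists>r k. r * of_nat p ^ k \<in> \<int> \<and> absval (a - of_rat r) \<le> 1"
proof -
  obtain k where k: "absval a \<le> real p ^ k"
    using real_arch_pow[of "real p" "absval a"] p_ge_2 by (auto intro: less_imp_le)
  have "absval (of_nat p ^ k * a) \<le> 1"
    using k p_pos by (simp add: absval_mult absval_of_nat_p_power field_simps)
  then obtain m where m: "absval (of_nat p ^ k * a - of_int m) \<le> (1 / real p) ^ k"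
    using int_approx_mod_p_power by blast
  define r :: rat where "r = of_int m / of_nat p ^ k"
  have pk: "(of_nat p ^ k :: 'k) \<noteq> 0" "(of_nat p ^ k :: rat) \<noteq> 0"
    using p_ge_2 by auto
  have "a - of_rat r = (of_nat p ^ k * a - of_int m) / of_nat p ^ k"
    using pk by (simp add: r_def of_rat_divide of_rat_power field_simps)
  then have "absval (a - of_rat r) \<le> 1"
    using m p_pos by (simp add: absval_divide absval_of_nat_p_power divide_le_eq)
  moreover have "r * of_nat p ^ k \<in> \<int>"
    using pk by (simp add: r_def)
  ultimately show ?thesis
    by blast
qed

lemma padic_frac_eq_frac:
  assumes k: "r * of_nat p ^ k \<in> \<int>" and a: "absval (a - of_rat r) \<le> 1"
  shows "padic_frac p absval a = frac r"
  unfolding padic_frac_def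
proof (rule the_equality)
  have "frac r * of_nat p ^ k = r * of_nat p ^ k - of_int \<lfloor>r\<rfloor> * of_nat p ^ k"
    by (simp add: frac_def left_diff_distrib)
  then have k': "frac r * of_nat p ^ k \<in> \<int>"
    using k by simp
  have eq: "a - of_rat (frac r) = (a - of_rat r) + of_int \<lfloor>r\<rfloor>"
    by (simp add: frac_def of_rat_diff)
  have a': "absval (a - of_rat (frac r)) \<le> 1"
    unfolding eq by (rule absval_add_le[OF a absval_of_int_le_1])
  show "0 \<le> frac r \<and> frac r < 1 \<and> (\<exists>k. frac r * of_nat p ^ k \<in> \<int>) \<and>
      absval (a - of_rat (frac r)) \<le> 1"
    using k' a' frac_lt_1[of r] by auto
  fix r' assume r': "0 \<le> r' \<and> r' < 1 \<and> (\<exists>k. r' * of_nat p ^ k \<in> \<int>) \<and> absval (a - of_rat r') \<le> 1"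
  then obtain m where m: "r' - frac r = of_int m"
    using p_power_denom_approx_diff_in_Ints k' a' by (blast elim: Ints_cases)
  have "0 \<le> r'" "r' < 1" "0 \<le> frac r" "frac r < 1"
    using r' frac_lt_1[of r] by auto
  then have "- 1 < (of_int m :: rat)" "(of_int m :: rat) < 1"
    using m by linarith+
  then have "m = 0"
    by linarith
  then show "r' = frac r"
    using m by simp
qed

lemma Psi_eq_cis:
  assumes "r * of_nat p ^ k \<in> \<int>" "absval (a - of_rat r) \<le> 1"
  shows "Psi p absval a = cis (2 * pi * real_of_rat r)"
proof -
  have "Psi p absval a = cis (2 * pi * real_of_rat (frac r))"
    by (simp add: Psi_def padic_frac_eq_frac[OF assms] cis_conv_exp mult_ac)
  also have "real_of_rat (frac r) = real_of_rat r - of_int \<lfloor>r\<rfloor>"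
    by (simp add: frac_def of_rat_diff)
  also have "cis (2 * pi * (real_of_rat r - of_int \<lfloor>r\<rfloor>)) = cis (2 * pi * real_of_rat r)"
    by (simp add: right_diff_distrib cis_divide[symmetric])
  finally show ?thesis .
qed

lemma norm_Psi [simp]: "cmod (Psi p absval a) = 1"
proof -
  obtain r k where "r * of_nat p ^ k \<in> \<int>" "absval (a - of_rat r) \<le> 1"
    using exists_p_power_denom_approx by blast
  then show ?thesis
    by (simp add: Psi_eq_cis)
qed

lemma Psi_add_absval_le_1:
  assumes b: "absval b \<le> 1"
  shows "Psi p absval (a + b) = Psi p absval a"
proof -
  obtain r k where r: "r * of_nat p ^ k \<in> \<int>" "absval (a - of_rat r) \<le> 1"
    using exists_p_power_denom_approx by blast
  moreover have "absval (a + b - of_rat r) \<le> 1"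
    using absval_add_le[OF r(2) b] by (simp add: algebra_simps)
  ultimately show ?thesis
    by (simp add: Psi_eq_cis)
qed

lemma Psi_add_inverse_p:
  "Psi p absval (a + 1 / of_nat p) = cis (2 * pi / real p) * Psi p absval a"
proof -
  obtain r k where r: "r * of_nat p ^ k \<in> \<int>" "absval (a - of_rat r) \<le> 1"
    using exists_p_power_denom_approx by blast
  have "(r + 1 / of_nat p) * of_nat p ^ Suc k = r * of_nat p ^ k * of_nat p + of_nat p ^ k"
    using p_ge_2 by (simp add: field_simps)
  also have "\<dots> \<in> \<int>"
    by (rule Ints_add[OF Ints_mult[OF r(1)]]) simp_all
  finally have "Psi p absval (a + 1 / of_nat p) = cis (2 * pi * real_of_rat (r + 1 / of_nat p))"
    by (rule Psi_eq_cis) (use r(2) in \<open>simp add: of_rat_add of_rat_divide\<close>)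
  also have "\<dots> = cis (2 * pi / real p) * cis (2 * pi * real_of_rat r)"
    by (simp add: cis_mult of_rat_add of_rat_divide algebra_simps)
  finally show ?thesis
    using Psi_eq_cis[OF r] by simp
qed

lemma cis_2pi_div_p_neq_1: "cis (2 * pi / real p) \<noteq> 1"
proof
  assume "cis (2 * pi / real p) = 1"
  then obtain n :: int where "2 * pi / real p = of_int n * 2 * pi"
    using cos_one_2pi_int[of "2 * pi / real p"] by (auto simp: complex_eq_iff)
  then have "2 * pi * (1 / real p) = 2 * pi * of_int n"
    by simp
  then have "1 / real p = of_int n"
    by (simp only: mult_cancel_left) simp
  moreover have "0 < 1 / real p" "1 / real p < 1"
    using p_ge_2 by auto
  ultimately show False
    by simp
qed

lemma absval_le_pnorm: "absval (x i) \<le> pnorm absval (x :: 'n::finite \<Rightarrow> 'k)"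
  unfolding pnorm_def by (rule Max_ge) auto

lemma pnorm_attained:
  obtains i where "absval (x i) = pnorm absval (x :: 'n::finite \<Rightarrow> 'k)"
proof -
  have "pnorm absval x \<in> range (\<lambda>i. absval (x i))"
    unfolding pnorm_def by (rule Max_in) auto
  then show ?thesis
    using that by auto
qed

lemma pnorm_le_iff: "pnorm absval (x :: 'n::finite \<Rightarrow> 'k) \<le> R \<longleftrightarrow> (\<forall>i. absval (x i) \<le> R)"
  unfolding pnorm_def by (subst Max_le_iff) auto

lemma pnorm_nonneg [simp]: "pnorm absval (x :: 'n::finite \<Rightarrow> 'k) \<ge> 0"
  using absval_le_pnorm[of x] absval_nonneg order_trans by blast

lemma pnorm_pos_iff [simp]: "pnorm absval (x :: 'n::finite \<Rightarrow> 'k) > 0 \<longleftrightarrow> x \<noteq> (\<lambda>_. 0)"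
proof
  assume "pnorm absval x > 0"
  then show "x \<noteq> (\<lambda>_. 0)"
    by (auto simp: pnorm_def)
next
  assume "x \<noteq> (\<lambda>_. 0)"
  then obtain i where "x i \<noteq> 0"
    by auto
  then show "pnorm absval x > 0"
    using absval_le_pnorm[of x i] absval_pos_iff[of "x i"] by linarith
qed

lemma mem_pball_0_iff: "\<xi> \<in> pball absval (\<lambda>_. 0) r \<longleftrightarrow> pnorm absval (\<xi> :: 'n::finite \<Rightarrow> 'k) \<le> r"
  by (simp add: pball_def pnorm_le_iff)

lemma zero_notin_pball:
  assumes "r < pnorm absval (\<xi> :: 'n::finite \<Rightarrow> 'k)"
  shows "(\<lambda>_. 0) \<notin> pball absval \<xi> r"
proof
  assume "(\<lambda>_. 0) \<in> pball absval \<xi> r"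
  then have "pnorm absval \<xi> \<le> r"
    by (simp add: pball_def pnorm_le_iff)
  with assms show False
    by simp
qed

lemma pball_of_int_subset_unit_pball:
  assumes "\<rho> \<le> 1"
  shows "pball absval (\<lambda>i. of_int (r i)) \<rho> \<subseteq> pball absval (\<lambda>_. 0) 1"
proof
  fix \<zeta> assume "\<zeta> \<in> pball absval (\<lambda>i. of_int (r i)) \<rho>"
  then have "absval (\<zeta> i - of_int (r i)) \<le> 1" for i
    using assms by (simp add: pball_def) (meson order_trans)
  then have "absval ((\<zeta> i - of_int (r i)) + of_int (r i)) \<le> 1" for i
    by (rule absval_add_le[OF _ absval_of_int_le_1])
  then show "\<zeta> \<in> pball absval (\<lambda>_. 0) 1"
    by (simp add: pball_def)
qed

lemma pnorm_translate_le_iff: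
  assumes "pnorm absval \<eta> \<le> r"
  shows "pnorm absval (translate \<eta> \<xi>) \<le> r \<longleftrightarrow> pnorm absval (\<xi> :: 'n::finite \<Rightarrow> 'k) \<le> r"
proof -
  have \<eta>: "absval (\<eta> i) \<le> r" for i
    using assms by (simp add: pnorm_le_iff)
  have "absval (\<eta> i + \<xi> i) \<le> r \<longleftrightarrow> absval (\<xi> i) \<le> r" for i
    using absval_add_le[OF \<eta>[of i], of "\<xi> i"] absval_diff_le[of "\<eta> i + \<xi> i" r "\<eta> i"] \<eta>[of i] by auto
  then show ?thesis
    by (simp add: pnorm_le_iff translate_def)
qed

lemma exists_dual_vector:
  fixes x :: "'n::finite \<Rightarrow> 'k"
  assumes "x \<noteq> (\<lambda>_. 0)"
  obtains \<eta> where "pnorm absval \<eta> \<le> real p / pnorm absval x" "(\<Sum>i\<in>UNIV. x i * \<eta> i) = 1 / of_nat p"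
proof -
  obtain i0 where i0: "absval (x i0) = pnorm absval x"
    by (rule pnorm_attained)
  with assms have "x i0 \<noteq> 0"
    using pnorm_pos_iff[of x] by fastforce
  define \<eta> where "\<eta> = (\<lambda>i. if i = i0 then 1 / (of_nat p * x i0) else 0)"
  have "absval (\<eta> i) \<le> real p / pnorm absval x" for i
    using p_pos assms by (simp add: \<eta>_def absval_divide absval_mult absval_of_nat_p i0)
  then have "pnorm absval \<eta> \<le> real p / pnorm absval x"
    by (simp add: pnorm_le_iff)
  moreover have "(\<Sum>i\<in>UNIV. x i * \<eta> i) = x i0 * (1 / (of_nat p * x i0))"
    by (simp add: \<eta>_def if_distrib cong: if_cong)
  then have "(\<Sum>i\<in>UNIV. x i * \<eta> i) = 1 / of_nat p"
    using \<open>x i0 \<noteq> 0\<close> p_ge_2 by simp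
  ultimately show ?thesis
    by (rule that)
qed

lemma Psi_dot_translate:
  assumes "(\<Sum>i\<in>UNIV. x i * \<eta> i) = 1 / of_nat p"
  shows "Psi p absval (\<Sum>i\<in>UNIV. x i * translate \<eta> \<xi> i)
    = cis (2 * pi / real p) * Psi p absval (\<Sum>i\<in>UNIV. x i * \<xi> i)"
proof -
  have "(\<Sum>i\<in>UNIV. x i * translate \<eta> \<xi> i) = (\<Sum>i\<in>UNIV. x i * \<xi> i) + 1 / of_nat p"
    using assms by (simp add: translate_def distrib_left sum.distrib add.commute)
  then show ?thesis
    by (simp add: Psi_add_inverse_p)
qed

text \<open>The factor \<open>R\<close> on the left is the division-free form of \<open>|\<Prod>u - \<Prod>v| \<le> \<delta> R^(\<Sum>m - 1)\<close>.\<close>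

lemma absval_prod_diff_le:
  assumes "finite S" "R > 0" "\<delta> \<ge> 0"
    and u: "\<And>j. j \<in> S \<Longrightarrow> absval (u j) \<le> R ^ m j"
    and v: "\<And>j. j \<in> S \<Longrightarrow> absval (v j) \<le> R ^ m j"
    and uv: "\<And>j. j \<in> S \<Longrightarrow> R * absval (u j - v j) \<le> \<delta> * R ^ m j"
  shows "R * absval (prod u S - prod v S) \<le> \<delta> * R ^ sum m S"
  using assms(1) u v uv
proof (induction S rule: finite_induct)
  case (insert j S)
  let ?U = "prod u S" and ?V = "prod v S"
  have IH: "R * absval (?U - ?V) \<le> \<delta> * R ^ sum m S"
    using insert by auto
  have V: "absval ?V \<le> R ^ sum m S"
    unfolding absval_prod power_sum using insert \<open>R > 0\<close> by (intro prod_mono) auto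
  have "R * absval (u j * (?U - ?V)) = absval (u j) * (R * absval (?U - ?V))"
    by (simp add: absval_mult)
  also have "\<dots> \<le> R ^ m j * (\<delta> * R ^ sum m S)"
    by (rule mult_mono) (use insert IH \<open>R > 0\<close> in auto)
  finally have t1: "absval (u j * (?U - ?V)) \<le> \<delta> * R ^ (m j + sum m S) / R"
    using \<open>R > 0\<close> by (simp add: field_simps power_add)
  have "R * absval ((u j - v j) * ?V) = (R * absval (u j - v j)) * absval ?V"
    by (simp add: absval_mult)
  also have "\<dots> \<le> (\<delta> * R ^ m j) * R ^ sum m S"
    by (rule mult_mono) (use insert V \<open>\<delta> \<ge> 0\<close> \<open>R > 0\<close> in auto)
  finally have t2: "absval ((u j - v j) * ?V) \<le> \<delta> * R ^ (m j + sum m S) / R"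
    using \<open>R > 0\<close> by (simp add: field_simps power_add)
  have "prod u (insert j S) - prod v (insert j S) = u j * (?U - ?V) + (u j - v j) * ?V"
    using insert by (simp add: algebra_simps)
  then have "absval (prod u (insert j S) - prod v (insert j S)) \<le> \<delta> * R ^ (m j + sum m S) / R"
    using absval_add_le[OF t1 t2] by simp
  then show ?case
    using insert \<open>R > 0\<close> by (simp add: field_simps)
qed (use assms in simp)

end

section \<open>The form \<open>f\<close>\<close>

locale padic_form = padic_field p absval for p :: nat and absval :: "'k::field_char_0 \<Rightarrow> real" +
  fixes d :: nat and c :: "('n::finite \<Rightarrow> nat) \<Rightarrow> 'k" and M :: nat
  assumes coeffs_Zp: "\<forall>\<alpha>. absval (c \<alpha>) \<le> 1"
    and hpoly_lower_bound_unit_sphere: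
      "\<forall>\<xi>. (\<forall>i. absval (\<xi> i) \<le> 1) \<and> (\<exists>i. absval (\<xi> i) = 1)
         \<longrightarrow> absval (hpoly d c \<xi>) \<ge> real p powr (- real M)"
begin

abbreviation f :: "('n \<Rightarrow> 'k) \<Rightarrow> 'k" where "f \<equiv> hpoly d c"

lemma absval_hpoly_le: "absval (f \<xi>) \<le> pnorm absval \<xi> ^ d"
proof -
  let ?N = "pnorm absval \<xi>"
  have "absval (c \<alpha> * (\<Prod>i\<in>UNIV. \<xi> i ^ \<alpha> i)) \<le> ?N ^ d" if "sum \<alpha> UNIV = d" for \<alpha>
  proof -
    have "absval (\<Prod>i\<in>UNIV. \<xi> i ^ \<alpha> i) \<le> (\<Prod>i\<in>UNIV. ?N ^ \<alpha> i)"
      unfolding absval_prod absval_power using absval_le_pnorm by (intro prod_mono conjI power_mono) auto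
    also have "\<dots> = ?N ^ d"
      using that by (simp add: power_sum[symmetric])
    finally show ?thesis
      using coeffs_Zp unfolding absval_mult by (meson absval_nonneg mult_left_le_one_le order_trans)
  qed
  then show ?thesis
    unfolding hpoly_def by (intro absval_sum_le) auto
qed

lemma absval_hpoly_ge:
  assumes "\<xi> \<noteq> (\<lambda>_. 0)"
  shows "absval (f \<xi>) \<ge> real p powr (- real M) * pnorm absval \<xi> ^ d"
proof -
  obtain i0 where i0: "absval (\<xi> i0) = pnorm absval \<xi>"
    by (rule pnorm_attained)
  with assms have "\<xi> i0 \<noteq> 0"
    using pnorm_pos_iff[of \<xi>] by fastforce
  define u where "u = (\<lambda>i. \<xi> i / \<xi> i0)"
  have "\<forall>i. absval (u i) \<le> 1"
    using absval_le_pnorm[of \<xi>] assms by (simp add: u_def absval_divide i0)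
  moreover have "absval (u i0) = 1"
    using \<open>\<xi> i0 \<noteq> 0\<close> by (simp add: u_def)
  ultimately have "absval (f u) \<ge> real p powr (- real M)"
    using hpoly_lower_bound_unit_sphere by blast
  moreover have "f \<xi> = \<xi> i0 ^ d * f u"
    using hpoly_scale[of d c "\<xi> i0" u] \<open>\<xi> i0 \<noteq> 0\<close> by (simp add: u_def)
  ultimately show ?thesis
    by (simp add: absval_mult absval_power i0 mult.commute mult_left_mono)
qed

lemma absval_hpoly_diff_le:
  assumes "R > 0" "\<delta> \<ge> 0"
    and "pnorm absval \<xi> \<le> R" "pnorm absval \<zeta> \<le> R" "pnorm absval (\<lambda>i. \<zeta> i - \<xi> i) \<le> \<delta>"
  shows "R * absval (f \<zeta> - f \<xi>) \<le> \<delta> * R ^ d"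
proof -
  have power: "R * absval (\<zeta> i ^ k - \<xi> i ^ k) \<le> \<delta> * R ^ k" for i k
    using absval_prod_diff_le[of "{..<k}" R \<delta> "\<lambda>_. \<zeta> i" "\<lambda>_. 1" "\<lambda>_. \<xi> i"] assms
    by (simp add: pnorm_le_iff)
  have monomial: "R * absval ((\<Prod>i\<in>UNIV. \<zeta> i ^ \<alpha> i) - (\<Prod>i\<in>UNIV. \<xi> i ^ \<alpha> i)) \<le> \<delta> * R ^ sum \<alpha> UNIV"
    for \<alpha> :: "'n \<Rightarrow> nat"
    using assms power
    by (intro absval_prod_diff_le) (auto simp: absval_power pnorm_le_iff intro: power_mono)
  have "R * absval (c \<alpha> * ((\<Prod>i\<in>UNIV. \<zeta> i ^ \<alpha> i) - (\<Prod>i\<in>UNIV. \<xi> i ^ \<alpha> i))) \<le> \<delta> * R ^ d"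
    if "sum \<alpha> UNIV = d" for \<alpha>
    using monomial[of \<alpha>] coeffs_Zp that \<open>R > 0\<close>
    by (simp add: absval_mult mult.left_commute[of R])
      (meson absval_nonneg mult_left_le_one_le order_trans mult_nonneg_nonneg less_imp_le)
  then have "absval (\<Sum>\<alpha> | sum \<alpha> UNIV = d. c \<alpha> * ((\<Prod>i\<in>UNIV. \<zeta> i ^ \<alpha> i) - (\<Prod>i\<in>UNIV. \<xi> i ^ \<alpha> i)))
      \<le> \<delta> * R ^ d / R"
    using assms by (intro absval_sum_le) (simp_all add: field_simps)
  moreover have "f \<zeta> - f \<xi>
      = (\<Sum>\<alpha> | sum \<alpha> UNIV = d. c \<alpha> * ((\<Prod>i\<in>UNIV. \<zeta> i ^ \<alpha> i) - (\<Prod>i\<in>UNIV. \<xi> i ^ \<alpha> i)))"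
    unfolding hpoly_def by (simp add: sum_subtractf right_diff_distrib)
  ultimately show ?thesis
    using \<open>R > 0\<close> by (simp add: field_simps)
qed

lemma absval_hpoly_eq_if_close:
  assumes close: "pnorm absval (\<lambda>i. \<zeta> i - \<xi> i) < real p powr (- real M) * pnorm absval \<xi>"
  shows "absval (f \<zeta>) = absval (f \<xi>)"
proof -
  define R where "R = pnorm absval \<xi>"
  define \<delta> where "\<delta> = pnorm absval (\<lambda>i. \<zeta> i - \<xi> i)"
  have "real p powr (- real M) * R \<le> R"
    by (intro mult_left_le_one_le p_powr_neg_le_1) (simp_all add: R_def)
  then have "\<delta> < R"
    using close by (simp add: R_def \<delta>_def)
  moreover have "0 \<le> \<delta>"
    by (simp add: \<delta>_def)
  ultimately have "R > 0"
    by linarith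
  then have "\<xi> \<noteq> (\<lambda>_. 0)"
    by (simp add: R_def)
  have "pnorm absval \<zeta> \<le> R"
    unfolding pnorm_le_iff
  proof
    fix i
    have "absval (\<zeta> i - \<xi> i) \<le> R" "absval (\<xi> i) \<le> R"
      using absval_le_pnorm[of "\<lambda>i. \<zeta> i - \<xi> i" i] absval_le_pnorm[of \<xi> i] \<open>\<delta> < R\<close>
      by (auto simp: R_def \<delta>_def)
    then show "absval (\<zeta> i) \<le> R"
      using absval_add_le by fastforce
  qed
  then have "R * absval (f \<zeta> - f \<xi>) \<le> \<delta> * R ^ d"
    using \<open>R > 0\<close> by (intro absval_hpoly_diff_le) (auto simp: R_def \<delta>_def)
  also have "\<dots> < R * (real p powr (- real M) * R ^ d)"
    using close \<open>R > 0\<close> by (simp add: R_def \<delta>_def mult_ac)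
  also have "\<dots> \<le> R * absval (f \<xi>)"
    using absval_hpoly_ge[OF \<open>\<xi> \<noteq> (\<lambda>_. 0)\<close>] \<open>R > 0\<close> by (simp add: R_def)
  finally have "absval (f \<zeta> - f \<xi>) < absval (f \<xi>)"
    using \<open>R > 0\<close> by simp
  then show ?thesis
    using absval_add_eq_left[of "f \<zeta> - f \<xi>" "f \<xi>"] by simp
qed

lemma heat_factor_sub_1_le:
  assumes "pnorm absval \<xi> \<le> \<rho>" "\<rho> > 0" "t \<ge> 0" "\<beta> \<ge> 0"
  shows "\<bar>exp (- t * absval (f \<xi>) powr \<beta>) - 1\<bar> \<le> t * \<rho> powr (real d * \<beta>)"
proof -
  have "\<bar>exp (- s) - 1\<bar> \<le> s" if "s \<ge> 0" for s :: real
    using that exp_ge_add_one_self[of "- s"] by simp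
  then have "\<bar>exp (- t * absval (f \<xi>) powr \<beta>) - 1\<bar> \<le> t * absval (f \<xi>) powr \<beta>"
    using assms(3) by simp
  also have "absval (f \<xi>) powr \<beta> \<le> (\<rho> ^ d) powr \<beta>"
    using order_trans[OF absval_hpoly_le power_mono[OF assms(1) pnorm_nonneg]] assms(4)
    by (intro powr_mono2) auto
  also have "(\<rho> ^ d) powr \<beta> = \<rho> powr (real d * \<beta>)"
    using assms(2) by (simp add: powr_powr flip: powr_realpow)
  finally show ?thesis
    using assms(3) by (simp add: mult_left_mono)
qed

end

section \<open>The Haar measure\<close>

locale padic_haar = padic_field p absval for p :: nat and absval :: "'k::field_char_0 \<Rightarrow> real" +
  fixes \<mu> :: "('n::finite \<Rightarrow> 'k) measure"
  assumes is_haar: "is_padic_haar absval \<mu>"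
begin

lemma space_\<mu> [simp]: "space \<mu> = UNIV"
  using is_haar by (simp add: is_padic_haar_def)

lemma sets_\<mu>: "sets \<mu> = sigma_sets UNIV {pball absval a r | a r. r > 0}"
  using is_haar by (simp add: is_padic_haar_def)

lemma emeasure_translate_image: "A \<in> sets \<mu> \<Longrightarrow> emeasure \<mu> (translate a ` A) = emeasure \<mu> A"
  using is_haar by (simp add: is_padic_haar_def translate_def[abs_def])

lemma emeasure_unit_pball: "emeasure \<mu> (pball absval (\<lambda>_. 0) 1) = 1"
  using is_haar by (simp add: is_padic_haar_def)

lemma pball_in_sets [measurable]: "r > 0 \<Longrightarrow> pball absval a r \<in> sets \<mu>"
  unfolding sets_\<mu> by (rule sigma_sets.Basic) blast

lemma open_in_sets:
  assumes U: "\<And>\<xi>. \<xi> \<in> U \<Longrightarrow> \<exists>r>0. pball absval \<xi> r \<subseteq> U"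
  shows "U \<in> sets \<mu>"
proof -
  define B where "B = (\<lambda>(q :: 'n \<Rightarrow> rat, k :: nat). pball absval (\<lambda>i. of_rat (q i)) ((1 / real p) ^ k))"
  have "U = (\<Union>qk\<in>{qk. B qk \<subseteq> U}. B qk)"
  proof (intro equalityI subsetI)
    fix \<xi> assume "\<xi> \<in> U"
    then obtain r where r: "r > 0" "pball absval \<xi> r \<subseteq> U"
      using U by blast
    obtain k where k: "(1 / real p) ^ k < r"
      using real_arch_pow_inv[OF r(1), of "1 / real p"] p_ge_2 by auto
    have "\<forall>i. \<exists>q. absval (\<xi> i - of_rat q) < (1 / real p) ^ k"
      using rat_dense p_pos by simp
    then obtain q where q: "\<And>i. absval (\<xi> i - of_rat (q i)) < (1 / real p) ^ k"
      by metis
    have "B (q, k) \<subseteq> pball absval \<xi> r"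
    proof
      fix \<zeta> assume "\<zeta> \<in> B (q, k)"
      have "absval ((\<zeta> i - of_rat (q i)) - (\<xi> i - of_rat (q i))) \<le> (1 / real p) ^ k" for i
        by (rule absval_diff_le) (use q[of i] \<open>\<zeta> \<in> B (q, k)\<close> in \<open>auto simp: B_def pball_def less_imp_le\<close>)
      then show "\<zeta> \<in> pball absval \<xi> r"
        unfolding pball_def by (auto intro: order_trans[OF _ less_imp_le[OF k]])
    qed
    moreover have "\<xi> \<in> B (q, k)"
      using q by (auto simp: B_def pball_def absval_minus_commute[of "\<xi> _"] less_imp_le)
    ultimately show "\<xi> \<in> (\<Union>qk\<in>{qk. B qk \<subseteq> U}. B qk)"
      using r by blast
  qed auto
  also have "\<dots> \<in> sets \<mu>"
    using p_pos by (intro sets.countable_UN) (auto simp: B_def)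
  finally show ?thesis .
qed

lemma singleton_0_in_sets: "{\<lambda>_. 0} \<in> sets \<mu>"
proof -
  have "{\<lambda>_. 0} = (\<Inter>k. pball absval (\<lambda>_. 0 :: 'k) ((1 / real p) ^ k) :: ('n \<Rightarrow> 'k) set)"
  proof (intro equalityI subsetI)
    fix \<xi> :: "'n \<Rightarrow> 'k" assume \<xi>: "\<xi> \<in> (\<Inter>k. pball absval (\<lambda>_. 0) ((1 / real p) ^ k))"
    have "absval (\<xi> i) = 0" for i
    proof (rule ccontr)
      assume "absval (\<xi> i) \<noteq> 0"
      then obtain k where "(1 / real p) ^ k < absval (\<xi> i)"
        using real_arch_pow_inv[of "absval (\<xi> i)" "1 / real p"] p_ge_2 by auto
      then show False
        using \<xi> by (auto simp: pball_def not_le[symmetric])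
    qed
    then show "\<xi> \<in> {\<lambda>_. 0}"
      by auto
  qed (auto simp: pball_def)
  also have "\<dots> \<in> sets \<mu>"
    using p_pos by (intro sets.countable_INT) auto
  finally show ?thesis .
qed

lemma measurable_if_locally_constant_off_0:
  fixes \<phi> :: "('n \<Rightarrow> 'k) \<Rightarrow> 'b::topological_space"
  assumes lc: "\<And>\<xi>. \<xi> \<noteq> (\<lambda>_. 0) \<Longrightarrow> \<exists>r>0. \<forall>\<zeta>\<in>pball absval \<xi> r. \<phi> \<zeta> = \<phi> \<xi>"
  shows "\<phi> \<in> borel_measurable \<mu>"
proof (rule measurableI)
  fix A :: "'b set"
  have "\<phi> -` A - {\<lambda>_. 0} \<in> sets \<mu>"
  proof (rule open_in_sets)
    fix \<xi> assume \<xi>: "\<xi> \<in> \<phi> -` A - {\<lambda>_. 0}"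
    then obtain r where r: "r > 0" "\<forall>\<zeta>\<in>pball absval \<xi> r. \<phi> \<zeta> = \<phi> \<xi>"
      using lc by blast
    define r' where "r' = min r (pnorm absval \<xi> / 2)"
    have "pnorm absval \<xi> > 0"
      using \<xi> by simp
    then have "r' > 0"
      using r by (simp add: r'_def)
    have "r' \<le> pnorm absval \<xi> / 2"
      by (simp add: r'_def)
    with \<open>pnorm absval \<xi> > 0\<close> have "(\<lambda>_. 0) \<notin> pball absval \<xi> r'"
      by (intro zero_notin_pball) linarith
    moreover have "pball absval \<xi> r' \<subseteq> pball absval \<xi> r"
      by (auto simp: pball_def r'_def)
    ultimately show "\<exists>r>0. pball absval \<xi> r \<subseteq> \<phi> -` A - {\<lambda>_. 0}"
      using \<open>r' > 0\<close> r(2) \<xi> by blast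
  qed
  moreover have "\<phi> -` A \<inter> {\<lambda>_. 0} \<in> sets \<mu>"
    using singleton_0_in_sets by (cases "\<phi> (\<lambda>_. 0) \<in> A") (simp_all add: Int_absorb1)
  ultimately have "(\<phi> -` A - {\<lambda>_. 0}) \<union> (\<phi> -` A \<inter> {\<lambda>_. 0}) \<in> sets \<mu>"
    by blast
  then show "\<phi> -` A \<inter> space \<mu> \<in> sets \<mu>"
    by (simp add: Un_Diff_Int)
qed simp

lemma pball_translate: "pball absval (translate a b) r = translate a ` pball absval b r"
proof (intro equalityI subsetI)
  fix \<xi> assume "\<xi> \<in> pball absval (translate a b) r"
  then have "translate (\<lambda>i. - a i) \<xi> \<in> pball absval b r" "\<xi> = translate a (translate (\<lambda>i. - a i) \<xi>)"
    by (auto simp: pball_def translate_def algebra_simps)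
  then show "\<xi> \<in> translate a ` pball absval b r"
    by blast
qed (auto simp: pball_def translate_def)

lemma translate_measurable: "translate a \<in> \<mu> \<rightarrow>\<^sub>M \<mu>"
proof (rule measurable_sigma_sets[OF sets_\<mu>])
  fix B :: "('n \<Rightarrow> 'k) set" assume "B \<in> {pball absval b r | b r. r > 0}"
  then obtain b r where "B = pball absval b r" "r > 0"
    by blast
  moreover have "translate a -` pball absval b r = pball absval (translate (\<lambda>i. - a i) b) r"
    by (auto simp: pball_def translate_def algebra_simps)
  ultimately show "translate a -` B \<inter> space \<mu> \<in> sets \<mu>"
    by simp
qed auto

lemma distr_translate: "distr \<mu> \<mu> (translate a) = \<mu>"
proof (rule measure_eqI)
  fix A assume "A \<in> sets (distr \<mu> \<mu> (translate a))"
  then have A: "A \<in> sets \<mu>"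
    by simp
  have "translate a -` A = translate (\<lambda>i. - a i) ` A"
    by (force simp: translate_def fun_eq_iff algebra_simps image_iff)
  then show "emeasure (distr \<mu> \<mu> (translate a)) A = emeasure \<mu> A"
    using A by (simp add: emeasure_distr[OF translate_measurable] emeasure_translate_image)
qed simp

lemma integral_translate:
  fixes h :: "('n \<Rightarrow> 'k) \<Rightarrow> 'b::{banach, second_countable_topology}"
  assumes "h \<in> borel_measurable \<mu>"
  shows "(\<integral>\<xi>. h (translate a \<xi>) \<partial>\<mu>) = integral\<^sup>L \<mu> h"
  using integral_distr[OF translate_measurable assms, of a] by (simp add: distr_translate)

lemma integral_eq_0_if_translate_twists:
  fixes h :: "('n \<Rightarrow> 'k) \<Rightarrow> complex"
  assumes "h \<in> borel_measurable \<mu>" "z \<noteq> 1" "\<And>\<xi>. h (translate a \<xi>) = z * h \<xi>"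
  shows "integral\<^sup>L \<mu> h = 0"
proof -
  have "integral\<^sup>L \<mu> h = z * integral\<^sup>L \<mu> h"
    using integral_translate[OF assms(1), of a] by (simp add: assms(3))
  then show ?thesis
    using assms(2) by (metis mult_cancel_right2)
qed

lemma emeasure_pball_eq: "r > 0 \<Longrightarrow> emeasure \<mu> (pball absval a r) = emeasure \<mu> (pball absval (\<lambda>_. 0) r)"
  using pball_translate[of a "\<lambda>_. 0" r] emeasure_translate_image[of "pball absval (\<lambda>_. 0) r" a]
  by (simp add: translate_def)

lemma pball_mono: "r \<le> s \<Longrightarrow> pball absval a r \<subseteq> pball absval a s"
  unfolding pball_def by (auto intro: order_trans[of _ r s])

definition residue_vectors :: "nat \<Rightarrow> ('n \<Rightarrow> int) set" where
  "residue_vectors K = Pi\<^sub>E UNIV (\<lambda>_. {0..<int p ^ K})"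

lemma finite_residue_vectors: "finite (residue_vectors K)"
  unfolding residue_vectors_def by (rule finite_PiE) auto

lemma card_residue_vectors: "card (residue_vectors K) = p ^ (K * CARD('n))"
proof -
  have "nat (int p ^ K) = p ^ K"
    by (metis nat_int of_nat_power)
  then show ?thesis
    unfolding residue_vectors_def by (simp add: card_PiE power_mult)
qed

lemma emeasure_pball_p_power_le:
  "emeasure \<mu> (pball absval (\<lambda>_. 0) (real p ^ K)) \<le> ennreal ((real p ^ K) ^ CARD('n))"
proof -
  define B where "B = (\<lambda>r :: 'n \<Rightarrow> int. pball absval (\<lambda>i. of_int (r i) / of_nat p ^ K) 1)"
  have cover: "pball absval (\<lambda>_. 0) (real p ^ K) \<subseteq> (\<Union>r\<in>residue_vectors K. B r)"
  proof
    fix \<xi> :: "'n \<Rightarrow> 'k" assume "\<xi> \<in> pball absval (\<lambda>_. 0) (real p ^ K)"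
    then have "absval (of_nat p ^ K * \<xi> i) \<le> 1" for i
      using p_pos by (simp add: pball_def absval_mult absval_of_nat_p_power field_simps)
    then have "\<forall>i. \<exists>m. 0 \<le> m \<and> m < int p ^ K \<and> absval (of_nat p ^ K * \<xi> i - of_int m) \<le> (1 / real p) ^ K"
      using int_approx_mod_p_power by blast
    then obtain r :: "'n \<Rightarrow> int" where r: "\<And>i. 0 \<le> r i \<and> r i < int p ^ K \<and>
        absval (of_nat p ^ K * \<xi> i - of_int (r i)) \<le> (1 / real p) ^ K"
      by metis
    have "\<xi> i - of_int (r i) / of_nat p ^ K = (of_nat p ^ K * \<xi> i - of_int (r i)) / of_nat p ^ K" for i
      using p_ge_2 by (simp add: field_simps)
    then have "\<xi> \<in> B r"
      using r p_pos by (simp add: B_def pball_def absval_divide absval_of_nat_p_power divide_le_eq)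
    moreover have "r \<in> residue_vectors K"
      using r by (simp add: residue_vectors_def PiE_UNIV_domain)
    ultimately show "\<xi> \<in> (\<Union>r\<in>residue_vectors K. B r)"
      by blast
  qed
  have "emeasure \<mu> (pball absval (\<lambda>_. 0) (real p ^ K)) \<le> emeasure \<mu> (\<Union>r\<in>residue_vectors K. B r)"
    using cover by (intro emeasure_mono) (auto simp: B_def)
  also have "\<dots> \<le> (\<Sum>r\<in>residue_vectors K. emeasure \<mu> (B r))"
    by (intro emeasure_subadditive_finite finite_residue_vectors) (auto simp: B_def)
  also have "\<dots> = of_nat (p ^ (K * CARD('n)))"
    by (simp add: B_def emeasure_pball_eq emeasure_unit_pball card_residue_vectors)
  finally show ?thesis
    by (simp add: power_mult ennreal_of_nat_eq_real_of_nat)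
qed

lemma disjoint_family_on_residue_pballs:
  "disjoint_family_on (\<lambda>r. pball absval (\<lambda>i. of_int (r i)) ((1 / real p) ^ K)) (residue_vectors K)"
  unfolding disjoint_family_on_def
proof (intro ballI impI; rule ccontr)
  fix r r' assume rr: "r \<in> residue_vectors K" "r' \<in> residue_vectors K" "r \<noteq> r'"
    and "pball absval (\<lambda>i. of_int (r i)) ((1 / real p) ^ K) \<inter> pball absval (\<lambda>i. of_int (r' i)) ((1 / real p) ^ K) \<noteq> {}"
  then obtain \<zeta> where \<zeta>: "\<zeta> \<in> pball absval (\<lambda>i. of_int (r i)) ((1 / real p) ^ K)"
    "\<zeta> \<in> pball absval (\<lambda>i. of_int (r' i)) ((1 / real p) ^ K)"
    by blast
  obtain i where "r i \<noteq> r' i"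
    using \<open>r \<noteq> r'\<close> by auto
  have "absval ((\<zeta> i - of_int (r' i)) - (\<zeta> i - of_int (r i))) \<le> (1 / real p) ^ K"
    using \<zeta> by (intro absval_diff_le[of "\<zeta> i - of_int (r' i)"]) (auto simp: pball_def)
  then have "int p ^ K dvd r i - r' i"
    by (simp flip: absval_of_int_le_iff_dvd)
  then have "int p ^ K \<le> \<bar>r i - r' i\<bar>"
    using dvd_imp_le_int[of "r i - r' i" "int p ^ K"] \<open>r i \<noteq> r' i\<close> by simp
  moreover have "0 \<le> r i" "r i < int p ^ K" "0 \<le> r' i" "r' i < int p ^ K"
    using rr by (auto simp: residue_vectors_def PiE_UNIV_domain)
  then have "\<bar>r i - r' i\<bar> < int p ^ K"
    by (simp add: abs_less_iff)
  ultimately show False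
    by linarith
qed

lemma emeasure_pball_inverse_p_power_le:
  "emeasure \<mu> (pball absval (\<lambda>_. 0) ((1 / real p) ^ K)) \<le> ennreal (((1 / real p) ^ K) ^ CARD('n))"
proof -
  define \<rho> where "\<rho> = (1 / real p) ^ K"
  define B where "B = (\<lambda>r :: 'n \<Rightarrow> int. pball absval (\<lambda>i. of_int (r i)) \<rho>)"
  define N where "N = p ^ (K * CARD('n))"
  have "N > 0"
    using p_ge_2 by (simp add: N_def)
  have \<rho>: "0 < \<rho>" "\<rho> \<le> 1"
    using p_ge_2 by (auto simp: \<rho>_def intro: power_le_one)
  have B_eq: "emeasure \<mu> (B r) = emeasure \<mu> (pball absval (\<lambda>_. 0) \<rho>)" for r
    unfolding B_def by (rule emeasure_pball_eq[OF \<rho>(1)])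
  have "of_nat N * emeasure \<mu> (pball absval (\<lambda>_. 0) \<rho>) = (\<Sum>r\<in>residue_vectors K. emeasure \<mu> (B r))"
    by (simp add: B_eq card_residue_vectors N_def)
  also have "\<dots> = emeasure \<mu> (\<Union>r\<in>residue_vectors K. B r)"
    using \<rho> disjoint_family_on_residue_pballs[of K]
    by (intro sum_emeasure) (auto simp: B_def \<rho>_def finite_residue_vectors)
  also have "\<dots> \<le> emeasure \<mu> (pball absval (\<lambda>_. 0) 1)"
    using pball_of_int_subset_unit_pball[OF \<rho>(2)] by (intro emeasure_mono) (auto simp: B_def)
  also have "\<dots> = of_nat N * ennreal (1 / real N)"
    using \<open>N > 0\<close> by (simp add: emeasure_unit_pball ennreal_of_nat_eq_real_of_nat flip: ennreal_mult)
  finally have "emeasure \<mu> (pball absval (\<lambda>_. 0) \<rho>) \<le> ennreal (1 / real N)"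
    using \<open>N > 0\<close> by (simp add: ennreal_mult_le_mult_iff)
  also have "1 / real N = \<rho> ^ CARD('n)"
    by (simp add: N_def \<rho>_def power_mult power_one_over)
  finally show ?thesis
    by (simp add: \<rho>_def)
qed

lemma emeasure_pball_le:
  assumes "\<rho> > 0"
  shows "emeasure \<mu> (pball absval (\<lambda>_. 0) \<rho>) \<le> ennreal ((real p * \<rho>) ^ CARD('n))"
proof -
  define j where "j = \<lceil>log (real p) \<rho>\<rceil>"
  have p1: "real p > 1"
    using p_ge_2 by simp
  have "\<rho> = real p powr (log (real p) \<rho>)"
    using assms p1 by simp
  also have "\<dots> \<le> real p powr j"
    using p1 by (simp add: j_def)
  finally have \<rho>_le: "\<rho> \<le> real p powr j" .
  have "real p powr j < real p powr (log (real p) \<rho> + 1)"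
    using p1 ceiling_correct[of "log (real p) \<rho>"] by (simp add: j_def)
  also have "\<dots> = real p * \<rho>"
    using assms p1 by (simp add: powr_add)
  finally have le_p\<rho>: "real p powr j < real p * \<rho>" .
  have "emeasure \<mu> (pball absval (\<lambda>_. 0) (real p powr j)) \<le> ennreal ((real p powr j) ^ CARD('n))"
  proof (cases j rule: int_cases2)
    case (nonneg K)
    then have "real p powr j = real p ^ K"
      using p1 by (simp add: powr_realpow)
    then show ?thesis
      using emeasure_pball_p_power_le by simp
  next
    case (nonpos K)
    then have "real p powr j = (1 / real p) ^ K"
      using p1 by (simp add: powr_minus_divide powr_realpow power_one_over)
    then show ?thesis
      using emeasure_pball_inverse_p_power_le by simp
  qed
  moreover have "emeasure \<mu> (pball absval (\<lambda>_. 0) \<rho>) \<le> emeasure \<mu> (pball absval (\<lambda>_. 0) (real p powr j))"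
    using p_pos by (intro emeasure_mono pball_mono[OF \<rho>_le]) simp
  moreover have "ennreal ((real p powr j) ^ CARD('n)) \<le> ennreal ((real p * \<rho>) ^ CARD('n))"
    using le_p\<rho> by (intro ennreal_leI power_mono) auto
  ultimately show ?thesis
    by order
qed

lemma measure_pball_le:
  assumes "\<rho> > 0"
  shows "measure \<mu> (pball absval (\<lambda>_. 0) \<rho>) \<le> (real p * \<rho>) ^ CARD('n)"
  unfolding measure_def using emeasure_pball_le[OF assms] assms p_pos by (intro enn2real_leI) auto

lemma Psi_dot_measurable: "(\<lambda>\<xi>. Psi p absval (\<Sum>i\<in>UNIV. x i * \<xi> i)) \<in> borel_measurable \<mu>"
proof (rule measurable_if_locally_constant_off_0)
  fix \<xi> :: "'n \<Rightarrow> 'k"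
  define r where "r = 1 / (pnorm absval x + 1)"
  have "Psi p absval (\<Sum>i\<in>UNIV. x i * \<zeta> i) = Psi p absval (\<Sum>i\<in>UNIV. x i * \<xi> i)"
    if "\<zeta> \<in> pball absval \<xi> r" for \<zeta>
  proof -
    have "absval (x i * (\<zeta> i - \<xi> i)) \<le> 1" for i
    proof -
      have "absval (x i) * absval (\<zeta> i - \<xi> i) \<le> pnorm absval x * r"
        using that absval_le_pnorm[of x i] by (intro mult_mono) (auto simp: pball_def r_def)
      also have "\<dots> \<le> 1"
        using add_nonneg_pos[OF pnorm_nonneg[of x] zero_less_one] by (simp add: r_def divide_le_eq_1)
      finally show ?thesis
        by (simp add: absval_mult)
    qed
    then have "absval (\<Sum>i\<in>UNIV. x i * (\<zeta> i - \<xi> i)) \<le> 1"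
      by (intro absval_sum_le) auto
    moreover have "(\<Sum>i\<in>UNIV. x i * \<zeta> i) = (\<Sum>i\<in>UNIV. x i * \<xi> i) + (\<Sum>i\<in>UNIV. x i * (\<zeta> i - \<xi> i))"
      by (simp add: algebra_simps flip: sum.distrib)
    ultimately show ?thesis
      by (simp add: Psi_add_absval_le_1)
  qed
  moreover have "r > 0"
    by (simp add: r_def add_nonneg_pos)
  ultimately show "\<exists>r>0. \<forall>\<zeta>\<in>pball absval \<xi> r.
      Psi p absval (\<Sum>i\<in>UNIV. x i * \<zeta> i) = Psi p absval (\<Sum>i\<in>UNIV. x i * \<xi> i)"
    by blast
qed

lemma integral_Psi_dot_mult_invariant_eq_0:
  fixes \<phi> :: "('n \<Rightarrow> 'k) \<Rightarrow> complex"
  assumes [measurable]: "\<phi> \<in> borel_measurable \<mu>"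
    and "(\<Sum>i\<in>UNIV. x i * \<eta> i) = 1 / of_nat p" "\<And>\<xi>. \<phi> (translate \<eta> \<xi>) = \<phi> \<xi>"
  shows "(\<integral>\<xi>. Psi p absval (\<Sum>i\<in>UNIV. x i * \<xi> i) * \<phi> \<xi> \<partial>\<mu>) = 0"
proof (rule integral_eq_0_if_translate_twists)
  show "(\<lambda>\<xi>. Psi p absval (\<Sum>i\<in>UNIV. x i * \<xi> i) * \<phi> \<xi>) \<in> borel_measurable \<mu>"
    using Psi_dot_measurable by measurable
  show "Psi p absval (\<Sum>i\<in>UNIV. x i * translate \<eta> \<xi> i) * \<phi> (translate \<eta> \<xi>)
      = cis (2 * pi / real p) * (Psi p absval (\<Sum>i\<in>UNIV. x i * \<xi> i) * \<phi> \<xi>)" for \<xi>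
    using assms(2,3) by (simp add: Psi_dot_translate)
qed (rule cis_2pi_div_p_neq_1)

end

section \<open>The heat kernel\<close>

locale padic_heat_kernel = padic_form p absval d c M + padic_haar p absval \<mu>
  for p :: nat and absval :: "'k::field_char_0 \<Rightarrow> real" and d :: nat
    and c :: "('n::finite \<Rightarrow> nat) \<Rightarrow> 'k" and M :: nat and \<mu> :: "('n \<Rightarrow> 'k) measure"
begin

lemma measurable_comp_absval_hpoly:
  fixes \<phi> :: "real \<Rightarrow> 'b::topological_space"
  shows "(\<lambda>\<xi>. \<phi> (absval (f \<xi>))) \<in> borel_measurable \<mu>"
proof (rule measurable_if_locally_constant_off_0)
  fix \<xi> :: "'n \<Rightarrow> 'k" assume "\<xi> \<noteq> (\<lambda>_. 0)"
  define r where "r = real p powr (- real M) * pnorm absval \<xi> / 2"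
  have "r > 0"
    using \<open>\<xi> \<noteq> (\<lambda>_. 0)\<close> p_pos by (simp add: r_def)
  moreover have "absval (f \<zeta>) = absval (f \<xi>)" if "\<zeta> \<in> pball absval \<xi> r" for \<zeta>
  proof (rule absval_hpoly_eq_if_close)
    have "pnorm absval (\<lambda>i. \<zeta> i - \<xi> i) \<le> r"
      using that by (simp add: pball_def pnorm_le_iff)
    also have "r < real p powr (- real M) * pnorm absval \<xi>"
      using \<open>r > 0\<close> by (simp add: r_def mult_ac)
    finally show "pnorm absval (\<lambda>i. \<zeta> i - \<xi> i) < real p powr (- real M) * pnorm absval \<xi>" .
  qed
  ultimately show "\<exists>r>0. \<forall>\<zeta>\<in>pball absval \<xi> r. \<phi> (absval (f \<zeta>)) = \<phi> (absval (f \<xi>))"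
    by auto
qed

definition cutoff_heat_factor :: "real \<Rightarrow> real \<Rightarrow> real \<Rightarrow> ('n \<Rightarrow> 'k) \<Rightarrow> real" where
  "cutoff_heat_factor \<beta> t \<rho> \<xi> =
    (if \<xi> \<in> pball absval (\<lambda>_. 0) \<rho> then 1 else exp (- t * absval (f \<xi>) powr \<beta>))"

lemma cutoff_heat_factor_measurable:
  assumes "\<rho> > 0"
  shows "cutoff_heat_factor \<beta> t \<rho> \<in> borel_measurable \<mu>"
proof -
  have [measurable]: "pball absval (\<lambda>_. 0) \<rho> \<in> sets \<mu>"
    using assms by simp
  have [measurable]: "(\<lambda>\<xi>. exp (- t * absval (f \<xi>) powr \<beta>)) \<in> borel_measurable \<mu>"
    by (rule measurable_comp_absval_hpoly)
  show ?thesis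
    unfolding cutoff_heat_factor_def by measurable
qed

lemma cutoff_heat_factor_translate:
  assumes "\<rho> > 0" and \<eta>: "pnorm absval \<eta> \<le> real p powr (- real M) * \<rho>"
  shows "cutoff_heat_factor \<beta> t \<rho> (translate \<eta> \<xi>) = cutoff_heat_factor \<beta> t \<rho> \<xi>"
proof -
  have "real p powr (- real M) * \<rho> \<le> \<rho>"
    using \<open>\<rho> > 0\<close> by (intro mult_left_le_one_le p_powr_neg_le_1) auto
  then have "pnorm absval \<eta> \<le> \<rho>"
    using \<eta> by linarith
  moreover have "absval (f (translate \<eta> \<xi>)) = absval (f \<xi>)" if "\<rho> < pnorm absval \<xi>"
  proof (rule absval_hpoly_eq_if_close)
    have "pnorm absval (\<lambda>i. translate \<eta> \<xi> i - \<xi> i) = pnorm absval \<eta>"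
      by (simp add: translate_def)
    also have "\<dots> < real p powr (- real M) * pnorm absval \<xi>"
      using that p_pos by (intro order_le_less_trans[OF \<eta>] mult_strict_left_mono) auto
    finally show "pnorm absval (\<lambda>i. translate \<eta> \<xi> i - \<xi> i) < real p powr (- real M) * pnorm absval \<xi>" .
  qed
  ultimately show ?thesis
    by (auto simp: cutoff_heat_factor_def mem_pball_0_iff pnorm_translate_le_iff)
qed

lemma heat_factor_sub_cutoff_le:
  assumes "\<rho> > 0" "t \<ge> 0" "\<beta> \<ge> 0"
  shows "\<bar>exp (- t * absval (f \<xi>) powr \<beta>) - cutoff_heat_factor \<beta> t \<rho> \<xi>\<bar>
    \<le> indicator (pball absval (\<lambda>_. 0) \<rho>) \<xi> * (t * \<rho> powr (real d * \<beta>))"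
  using heat_factor_sub_1_le[of \<xi> \<rho> t \<beta>] assms by (simp add: cutoff_heat_factor_def mem_pball_0_iff)

lemma integral_Psi_dot_mult_cutoff_eq_0:
  assumes "x \<noteq> (\<lambda>_. 0)" and \<rho>: "\<rho> = real p powr (real M + 1) / pnorm absval x"
  shows "(\<integral>\<xi>. Psi p absval (\<Sum>i\<in>UNIV. x i * \<xi> i) * cutoff_heat_factor \<beta> t \<rho> \<xi> \<partial>\<mu>) = 0"
proof -
  have "\<rho> > 0"
    using assms(1) p_pos by (simp add: \<rho>)
  obtain \<eta> where \<eta>: "pnorm absval \<eta> \<le> real p / pnorm absval x" "(\<Sum>i\<in>UNIV. x i * \<eta> i) = 1 / of_nat p"
    using exists_dual_vector[OF assms(1)] by blast
  have "real p powr (- real M) * real p powr (real M + 1) = real p"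
    using p_pos by (simp flip: powr_add)
  then have \<eta>_small: "pnorm absval \<eta> \<le> real p powr (- real M) * \<rho>"
    using \<eta>(1) by (simp add: \<rho>)
  show ?thesis
  proof (rule integral_Psi_dot_mult_invariant_eq_0[OF _ \<eta>(2)])
    show "(\<lambda>\<xi>. complex_of_real (cutoff_heat_factor \<beta> t \<rho> \<xi>)) \<in> borel_measurable \<mu>"
      using cutoff_heat_factor_measurable[OF \<open>\<rho> > 0\<close>] by measurable
    show "complex_of_real (cutoff_heat_factor \<beta> t \<rho> (translate \<eta> \<xi>))
        = complex_of_real (cutoff_heat_factor \<beta> t \<rho> \<xi>)" for \<xi>
      by (simp add: cutoff_heat_factor_translate[OF \<open>\<rho> > 0\<close> \<eta>_small])
  qed
qed

lemma heat_remainder_integrable_and_bounded: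
  fixes x :: "'n \<Rightarrow> 'k"
  assumes "\<rho> > 0" "t \<ge> 0" "\<beta> \<ge> 0"
  defines "h \<equiv> \<lambda>\<xi>. Psi p absval (\<Sum>i\<in>UNIV. x i * \<xi> i)
      * (exp (- t * absval (f \<xi>) powr \<beta>) - cutoff_heat_factor \<beta> t \<rho> \<xi>)"
  shows "integrable \<mu> h" "cmod (integral\<^sup>L \<mu> h)
    \<le> measure \<mu> (pball absval (\<lambda>_. 0) \<rho>) * (t * \<rho> powr (real d * \<beta>))"
proof -
  have [measurable]: "(\<lambda>\<xi>. Psi p absval (\<Sum>i\<in>UNIV. x i * \<xi> i)) \<in> borel_measurable \<mu>"
    "(\<lambda>\<xi>. exp (- t * absval (f \<xi>) powr \<beta>)) \<in> borel_measurable \<mu>"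
    "cutoff_heat_factor \<beta> t \<rho> \<in> borel_measurable \<mu>"
    using Psi_dot_measurable measurable_comp_absval_hpoly cutoff_heat_factor_measurable[OF assms(1)]
    by auto
  have "h \<in> borel_measurable \<mu>"
    unfolding h_def by measurable
  moreover have "pball absval (\<lambda>_. 0) \<rho> \<in> sets \<mu>"
    using assms(1) by simp
  moreover have "emeasure \<mu> (pball absval (\<lambda>_. 0) \<rho>) < \<infinity>"
    using emeasure_pball_le[OF assms(1)] by (simp add: le_less_trans)
  moreover have "norm (h \<xi>) \<le> indicator (pball absval (\<lambda>_. 0) \<rho>) \<xi> * (t * \<rho> powr (real d * \<beta>))" for \<xi>
    using heat_factor_sub_cutoff_le[OF assms(1-3), of \<xi>]
    by (simp add: h_def norm_mult flip: of_real_diff)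
  ultimately show "integrable \<mu> h" "cmod (integral\<^sup>L \<mu> h)
      \<le> measure \<mu> (pball absval (\<lambda>_. 0) \<rho>) * (t * \<rho> powr (real d * \<beta>))"
    using norm_integral_le_indicator_bound by blast+
qed

lemma norm_Zkernel_le_measure:
  assumes "\<beta> \<ge> 0" "t \<ge> 0" "x \<noteq> (\<lambda>_. 0)" and \<rho>: "\<rho> = real p powr (real M + 1) / pnorm absval x"
  shows "cmod (Zkernel p absval \<mu> f \<beta> x t)
    \<le> measure \<mu> (pball absval (\<lambda>_. 0) \<rho>) * (t * \<rho> powr (real d * \<beta>))"
proof -
  let ?\<Psi> = "\<lambda>\<xi>. Psi p absval (\<Sum>i\<in>UNIV. x i * \<xi> i)"
  let ?g = "\<lambda>\<xi>. exp (- t * absval (f \<xi>) powr \<beta>)"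
  let ?\<phi> = "cutoff_heat_factor \<beta> t \<rho>"
  have "\<rho> > 0"
    using assms(3) p_pos by (simp add: \<rho>)
  note remainder = heat_remainder_integrable_and_bounded[OF \<open>\<rho> > 0\<close> assms(2,1), of x]
  have "(\<integral>\<xi>. ?\<Psi> \<xi> * ?g \<xi> - ?\<Psi> \<xi> * (?g \<xi> - ?\<phi> \<xi>) \<partial>\<mu>) = (\<integral>\<xi>. ?\<Psi> \<xi> * ?\<phi> \<xi> \<partial>\<mu>)"
    by (simp add: algebra_simps)
  also have "\<dots> = 0"
    by (rule integral_Psi_dot_mult_cutoff_eq_0[OF assms(3) \<rho>])
  finally have "cmod (\<integral>\<xi>. ?\<Psi> \<xi> * ?g \<xi> \<partial>\<mu>) \<le> cmod (\<integral>\<xi>. ?\<Psi> \<xi> * (?g \<xi> - ?\<phi> \<xi>) \<partial>\<mu>)"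
    by (rule norm_integral_le_if_integral_diff_eq_0[OF remainder(1)])
  then show ?thesis
    using remainder(2) by (simp add: Zkernel_def)
qed

lemma norm_Zkernel_le:
  assumes "\<beta> \<ge> 0" "t \<ge> 0" "x \<noteq> (\<lambda>_. 0)"
  shows "cmod (Zkernel p absval \<mu> f \<beta> x t)
    \<le> real p ^ CARD('n) * real p powr ((real M + 1) * (real d * \<beta> + real CARD('n))) * t
       * pnorm absval x powr (- real d * \<beta> - real CARD('n))"
proof -
  define \<rho> where "\<rho> = real p powr (real M + 1) / pnorm absval x"
  have "\<rho> > 0" "pnorm absval x > 0"
    using assms(3) p_pos by (simp_all add: \<rho>_def)
  have "cmod (Zkernel p absval \<mu> f \<beta> x t) \<le> measure \<mu> (pball absval (\<lambda>_. 0) \<rho>) * (t * \<rho> powr (real d * \<beta>))"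
    using norm_Zkernel_le_measure[OF assms \<rho>_def] .
  also have "\<dots> \<le> (real p * \<rho>) ^ CARD('n) * (t * \<rho> powr (real d * \<beta>))"
    using measure_pball_le[OF \<open>\<rho> > 0\<close>] assms(2) by (intro mult_right_mono) simp_all
  also have "\<dots> = real p ^ CARD('n) * real p powr ((real M + 1) * (real d * \<beta> + real CARD('n))) * t
       * pnorm absval x powr (- real d * \<beta> - real CARD('n))"
    using scaled_volume_eq[of "real p" "pnorm absval x" "real M + 1" "CARD('n)" t "real d * \<beta>"] p_pos
      \<open>pnorm absval x > 0\<close> by (simp add: \<rho>_def)
  finally show ?thesis .
qed

end

theorem proposition1:
  fixes p :: nat and absval :: "'k::field_char_0 \<Rightarrow> real"
    and \<mu> :: "('n::finite \<Rightarrow> 'k) measure"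
    and d :: nat and c :: "('n \<Rightarrow> nat) \<Rightarrow> 'k"
    and \<beta> :: real and M :: nat
  assumes Qp: "is_Qp p absval"
    and haar: "is_padic_haar absval \<mu>"
    and beta: "\<beta> > 0"
    and coeffs_Zp: "\<forall>\<alpha>. absval (c \<alpha>) \<le> 1"
    and nonconst: "d \<ge> 1" "\<exists>\<alpha>. sum \<alpha> UNIV = d \<and> c \<alpha> \<noteq> 0"
    and elliptic: "\<forall>\<xi>. hpoly d c \<xi> = 0 \<longleftrightarrow> \<xi> = (\<lambda>_. 0)"
    and Mpos: "M > 0"
    and Mbound: "\<forall>\<xi>. (\<forall>i. absval (\<xi> i) \<le> 1) \<and> (\<exists>i. absval (\<xi> i) = 1)
                  \<longrightarrow> absval (hpoly d c \<xi>) \<ge> real p powr (- real M)"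
  shows "\<exists>C>0. \<forall>x t. x \<noteq> (\<lambda>_. 0) \<and> t > 0 \<and>
           real p powr ((real M + 1) * real d * \<beta>) * t * pnorm absval x powr (- real d * \<beta>) \<le> 1
           \<longrightarrow> cmod (Zkernel p absval \<mu> (hpoly d c) \<beta> x t)
                 \<le> C * t * pnorm absval x powr (- real d * \<beta> - real CARD('n))"
proof -
  \<comment> \<open>Only \<open>Qp\<close>, \<open>haar\<close>, \<open>beta\<close>, \<open>coeffs_Zp\<close> and \<open>Mbound\<close> are needed: the bound holds
    without the smallness condition on \<open>t\<close>, and ellipticity follows from \<open>Mbound\<close>.\<close>
  interpret padic_heat_kernel p absval d c M \<mu>
    using Qp haar coeffs_Zp Mbound by unfold_locales
  define C where "C = real p ^ CARD('n) * real p powr ((real M + 1) * (real d * \<beta> + real CARD('n)))"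
  have "C > 0"
    using p_pos by (simp add: C_def)
  moreover have "cmod (Zkernel p absval \<mu> (hpoly d c) \<beta> x t)
      \<le> C * t * pnorm absval x powr (- real d * \<beta> - real CARD('n))" if "x \<noteq> (\<lambda>_. 0)" "t > 0" for x t
    using norm_Zkernel_le[of \<beta> t x] beta that by (simp add: C_def)
  ultimately show ?thesis
    by blast
qed

end
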